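(* Every universal distance matrix is weakly universal. There exist weakly universal distance matrices which are not universal.
   Context: $\mathcal R$ is the set of infinite real matrices $r=\{r_{i,j}\}_{i,j\ge1}$ with $r_{i,i}=0$, $r_{i,j}\ge0$, $r_{i,j}=r_{j,i}$, $r_{i,k}+r_{k,j}\ge r_{i,j}$; $\mathcal R_n$ is the analogous set of $n\times n$ matrices (with the usual topology of $\mathbb R^{n^2}$), and $p_n(r)$ is the upper-left $n\times n$ corner. $r$ is proper if $r_{i,j}>0$ for $i\neq j$. For $q\in\mathcal R_n$, $A(q)=\{a\in\mathbb R^n:|a_i-a_j|\le q_{i,j}\le a_i+a_j\ \forall i,j\}$. A proper $r\in\mathcal R$ is universal if for every $n$, every $a\in A(p_n(r))$ and every $\epsilon>0$ there is $m\in\mathbb N$ with $\max_{1\le i\le n}|r_{i,m}-a_i|<\epsilon$. A proper $r\in\mathcal R$ is weakly universal if for every $n$ the set of all submatrices $\{r_{i_k,i_s}\}_{k,s=1}^n$, over all $n$-tuples of (distinct) indices $i_1,\dots,i_n\in\mathbb N$, is dense in $\mathcal R_n$. *)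

theory Defs
  imports "HOL-Analysis.Analysis"
begin

text \<open>Infinite distance matrices are modelled as r :: nat => nat => real,
  indexed from 0 (index i here corresponds to index i+1 in the paper).\<close>

definition dist_matrix :: "(nat \<Rightarrow> nat \<Rightarrow> real) \<Rightarrow> bool" where
  "dist_matrix r \<longleftrightarrow>
     (\<forall>i. r i i = 0) \<and> (\<forall>i j. r i j \<ge> 0) \<and> (\<forall>i j. r i j = r j i) \<and>
     (\<forall>i j k. r i k + r k j \<ge> r i j)"

definition dist_matrix_n :: "nat \<Rightarrow> (nat \<Rightarrow> nat \<Rightarrow> real) \<Rightarrow> bool" where
  "dist_matrix_n n q \<longleftrightarrow>
     (\<forall>i<n. q i i = 0) \<and> (\<forall>i<n. \<forall>j<n. q i j \<ge> 0) \<and> (\<forall>i<n. \<forall>j<n. q i j = q j i) \<and>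
     (\<forall>i<n. \<forall>j<n. \<forall>k<n. q i k + q k j \<ge> q i j)"

definition proper :: "(nat \<Rightarrow> nat \<Rightarrow> real) \<Rightarrow> bool" where
  "proper r \<longleftrightarrow> (\<forall>i j. i \<noteq> j \<longrightarrow> r i j > 0)"

text \<open>A(q) for an n x n matrix q; vectors a are functions, only a i for i < n matter.\<close>
definition A_set :: "nat \<Rightarrow> (nat \<Rightarrow> nat \<Rightarrow> real) \<Rightarrow> (nat \<Rightarrow> real) set" where
  "A_set n q = {a. \<forall>i<n. \<forall>j<n. \<bar>a i - a j\<bar> \<le> q i j \<and> q i j \<le> a i + a j}"

text \<open>The corner p_n(r) is r restricted to indices < n; A(p_n r) = A_set n r.\<close>
definition universal :: "(nat \<Rightarrow> nat \<Rightarrow> real) \<Rightarrow> bool" where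
  "universal r \<longleftrightarrow> dist_matrix r \<and> proper r \<and>
     (\<forall>n. \<forall>a \<in> A_set n r. \<forall>\<epsilon>>0. \<exists>m. \<forall>i<n. \<bar>r i m - a i\<bar> < \<epsilon>)"

text \<open>Density in R_n (topology of R^(n^2)) written out with sup-distance balls.\<close>
definition weakly_universal :: "(nat \<Rightarrow> nat \<Rightarrow> real) \<Rightarrow> bool" where
  "weakly_universal r \<longleftrightarrow> dist_matrix r \<and> proper r \<and>
     (\<forall>n q. dist_matrix_n n q \<longrightarrow> (\<forall>\<epsilon>>0. \<exists>idx :: nat \<Rightarrow> nat. inj_on idx {..<n} \<and>
        (\<forall>k<n. \<forall>s<n. \<bar>r (idx k) (idx s) - q k s\<bar> < \<epsilon>)))"

end

theory Submission
  imports Defs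
begin

(* A universal matrix realises, up to any error, every one-point extension of finitely many of
   its points allowed by the triangle inequality: such an extension d extends to all points by
   Katetov's formula a i = min_k (d k + r i (p k)).  Adding a point at a time thus produces
   approximate copies of any finite metric q; adding a constant c to the off-diagonal entries
   of q first makes all triangle inequalities strict by c, which absorbs the errors.

   For the second claim take the sup-metric on the sequences (length xs, xs!0, xs!1, ..., 0, ...)
   for lists xs of rationals.  Frechet's embedding k |-> [q k 0, ..., q k (n - 1)], rounded to
   rationals, shows that this space is weakly universal; but the empty list is at distance at
   least 1 from every other point, whereas a universal matrix has no isolated points. *)

definition approx_copy :: "(nat \<Rightarrow> nat \<Rightarrow> real) \<Rightarrow> nat \<Rightarrow> (nat \<Rightarrow> nat \<Rightarrow> real) \<Rightarrow> real \<Rightarrow> (nat \<Rightarrow> nat) \<Rightarrow> bool" where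
  "approx_copy r n q \<epsilon> idx \<longleftrightarrow> (\<forall>k<n. \<forall>s<n. \<bar>r (idx k) (idx s) - q k s\<bar> < \<epsilon>)"

definition shift_offdiag :: "real \<Rightarrow> (nat \<Rightarrow> nat \<Rightarrow> real) \<Rightarrow> nat \<Rightarrow> nat \<Rightarrow> real" where
  "shift_offdiag c q = (\<lambda>i j. if i = j then 0 else q i j + c)"

lemma dist_matrix_n_shift_offdiag:
  assumes "dist_matrix_n n q" "0 \<le> c"
  shows "dist_matrix_n n (shift_offdiag c q)"
  using assms unfolding dist_matrix_n_def shift_offdiag_def
  by (smt (verit))

lemma dist_matrix_n_SucD: "dist_matrix_n (Suc n) q \<Longrightarrow> dist_matrix_n n q"
  unfolding dist_matrix_n_def by auto

lemma A_set_extension: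
  assumes r: "dist_matrix r" and "0 < n" and d: "d \<in> A_set n (\<lambda>k l. r (idx k) (idx l))"
  obtains a where "\<And>N. a \<in> A_set N r" and "\<And>k. k < n \<Longrightarrow> a (idx k) = d k"
proof
  define a where "a i = Min ((\<lambda>k. d k + r i (idx k)) ` {..<n})" for i
  have tri: "r i j \<le> r i k + r k j" and sym: "r i j = r j i" and r0: "r i i = 0" for i j k
    using r unfolding dist_matrix_def by auto
  have d_le: "\<bar>d k - d l\<bar> \<le> r (idx k) (idx l)" "r (idx k) (idx l) \<le> d k + d l" if "k < n" "l < n" for k l
    using d that unfolding A_set_def by auto
  have a_le: "a i \<le> d k + r i (idx k)" if "k < n" for i k
    unfolding a_def using that by (intro Min_le) auto
  have a_attained: "\<exists>k<n. a i = d k + r i (idx k)" for i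
  proof -
    have "a i \<in> (\<lambda>k. d k + r i (idx k)) ` {..<n}"
      unfolding a_def using \<open>0 < n\<close> by (intro Min_in) auto
    then show ?thesis by auto
  qed
  have lipschitz: "a i - a j \<le> r i j" for i j
  proof -
    obtain k where "k < n" "a j = d k + r j (idx k)" using a_attained by blast
    with a_le[of k i] tri[of i "idx k" j] sym[of i j] show ?thesis by linarith
  qed
  show "a \<in> A_set N r" for N
  proof -
    have "r i j \<le> a i + a j" for i j
    proof -
      obtain k l where "k < n" "a i = d k + r i (idx k)" "l < n" "a j = d l + r j (idx l)"
        using a_attained by meson
      with d_le(2)[of k l] tri[of i j "idx k"] tri[of "idx k" j "idx l"] sym[of j "idx l"]
      show ?thesis by linarith
    qed
    moreover have "\<bar>a i - a j\<bar> \<le> r i j" for i j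
      using lipschitz[of i j] lipschitz[of j i] sym[of i j] by linarith
    ultimately show ?thesis unfolding A_set_def by blast
  qed
  show "a (idx k) = d k" if "k < n" for k
  proof -
    obtain l where "l < n" "a (idx k) = d l + r (idx k) (idx l)" using a_attained by blast
    with a_le[OF that, of "idx k"] d_le(1)[of l k] that r0 sym[of "idx k" "idx l"]
    show ?thesis by (simp add: abs_le_iff)
  qed
qed

lemma universal_realizes_A_set:
  assumes U: "universal r" and "0 < n" and d: "d \<in> A_set n (\<lambda>k l. r (idx k) (idx l))"
    and "0 < \<epsilon>"
  obtains m where "\<And>k. k < n \<Longrightarrow> \<bar>r (idx k) m - d k\<bar> < \<epsilon>"
proof -
  have "dist_matrix r" using U unfolding universal_def by blast
  obtain a where a: "\<And>N. a \<in> A_set N r" and ad: "\<And>k. k < n \<Longrightarrow> a (idx k) = d k"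
    using A_set_extension[OF \<open>dist_matrix r\<close> \<open>0 < n\<close> d] by blast
  obtain m where m: "\<forall>i < Suc (Max (idx ` {..<n})). \<bar>r i m - a i\<bar> < \<epsilon>"
    using U a \<open>0 < \<epsilon>\<close> unfolding universal_def by blast
  have "\<bar>r (idx k) m - d k\<bar> < \<epsilon>" if "k < n" for k
  proof -
    have "idx k < Suc (Max (idx ` {..<n}))" using that by (simp add: le_imp_less_Suc)
    then have "\<bar>r (idx k) m - a (idx k)\<bar> < \<epsilon>" using m by blast
    with ad[OF that] show ?thesis by simp
  qed
  then show ?thesis by (rule that)
qed

lemma universal_no_isolated_point:
  assumes U: "universal r" and "0 < \<delta>"
  obtains m where "0 < r i m" "r i m < \<delta>"
proof -
  have "(\<lambda>_. \<delta>/2) \<in> A_set 1 (\<lambda>_ _. r i i)"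
    using U \<open>0 < \<delta>\<close> unfolding A_set_def universal_def dist_matrix_def by auto
  from universal_realizes_A_set[OF U _ this, of "\<delta>/2"] \<open>0 < \<delta>\<close>
  obtain m where "\<bar>r i m - \<delta>/2\<bar> < \<delta>/2" by auto
  then have "0 < r i m" "r i m < \<delta>" unfolding abs_less_iff by linarith+
  then show ?thesis by (rule that)
qed

lemma approx_copy_shift_column_A_set:
  assumes r: "dist_matrix r" and q: "dist_matrix_n (Suc n) q" and "0 < c"
    and copy: "approx_copy r n (shift_offdiag c q) (c/2) idx"
  shows "(\<lambda>k. q k n + c) \<in> A_set n (\<lambda>k l. r (idx k) (idx l))"
  unfolding A_set_def
proof (intro CollectI allI impI)
  fix k l assume kl: "k < n" "l < n"
  have q_sym: "q i j = q j i" and q_tri: "q i j \<le> q i m + q m j" and q_nonneg: "0 \<le> q i j"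
    if "i < Suc n" "j < Suc n" "m < Suc n" for i j m
    using q that unfolding dist_matrix_n_def by auto
  show "\<bar>(q k n + c) - (q l n + c)\<bar> \<le> r (idx k) (idx l) \<and> r (idx k) (idx l) \<le> (q k n + c) + (q l n + c)"
  proof (cases "k = l")
    case True
    have "r (idx k) (idx k) = 0" using r unfolding dist_matrix_def by blast
    then show ?thesis using True q_nonneg[of k n 0] kl \<open>0 < c\<close> by simp
  next
    case False
    with copy kl have "\<bar>r (idx k) (idx l) - (q k l + c)\<bar> < c/2"
      unfolding approx_copy_def shift_offdiag_def by presburger
    moreover have "q k n \<le> q k l + q l n" "q l n \<le> q l k + q k n" "q k l \<le> q k n + q n l"
      using q_tri kl by auto
    moreover have "q l k = q k l" "q n l = q l n" using q_sym[of _ _ 0] kl by auto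
    ultimately show ?thesis using \<open>0 < c\<close> unfolding abs_le_iff abs_less_iff by linarith
  qed
qed

lemma universal_extend_approx_copy:
  assumes U: "universal r" and q: "dist_matrix_n (Suc n) q" and "0 < n" "0 < c"
    and copy: "approx_copy r n (shift_offdiag c q) (c/2) idx"
  obtains m where "approx_copy r (Suc n) (shift_offdiag c q) (c/2) (idx(n := m))"
proof -
  have r: "dist_matrix r" using U unfolding universal_def by blast
  then have r_sym: "r i j = r j i" and r0: "r i i = 0" for i j
    unfolding dist_matrix_def by auto
  have q_sym: "q n s = q s n" if "s < n" for s
    using q that unfolding dist_matrix_n_def by auto
  obtain m where m: "\<And>k. k < n \<Longrightarrow> \<bar>r (idx k) m - (q k n + c)\<bar> < c/2"
    using universal_realizes_A_set[OF U \<open>0 < n\<close> approx_copy_shift_column_A_set[OF r q \<open>0 < c\<close> copy]]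
      \<open>0 < c\<close> by (metis half_gt_zero)
  have "\<bar>r ((idx(n := m)) k) ((idx(n := m)) s) - shift_offdiag c q k s\<bar> < c/2"
    if ks: "k < Suc n" "s < Suc n" for k s
  proof -
    consider "k < n" "s < n" | "k < n" "s = n" | "k = n" "s < n" | "k = n" "s = n"
      using ks by (metis less_Suc_eq)
    then show ?thesis
    proof cases
      case 1
      then show ?thesis using copy unfolding approx_copy_def by simp
    next
      case 2
      then show ?thesis using m by (simp add: shift_offdiag_def)
    next
      case 3
      then show ?thesis using m[of s] r_sym[of m] q_sym[of s] by (simp add: shift_offdiag_def)
    next
      case 4
      then show ?thesis using \<open>0 < c\<close> by (simp add: r0 shift_offdiag_def)
    qed
  qed
  then show ?thesis using that unfolding approx_copy_def by blast
qed

lemma universal_approx_copy_shift: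
  assumes U: "universal r" and q: "dist_matrix_n n q" and "0 < c"
  shows "\<exists>idx. approx_copy r n (shift_offdiag c q) (c/2) idx"
  using q
proof (induction n)
  case 0
  then show ?case by (simp add: approx_copy_def)
next
  case (Suc n)
  show ?case
  proof (cases "n = 0")
    case True
    have "r 0 0 = 0" using U unfolding universal_def dist_matrix_def by blast
    then show ?thesis using True \<open>0 < c\<close>
      by (intro exI[of _ "\<lambda>_. 0"]) (simp add: approx_copy_def shift_offdiag_def)
  next
    case False
    then obtain idx where "approx_copy r n (shift_offdiag c q) (c/2) idx"
      using Suc dist_matrix_n_SucD by blast
    then show ?thesis using universal_extend_approx_copy[OF U Suc.prems] False \<open>0 < c\<close> by blast
  qed
qed

lemma weakly_universalI_shift:
  assumes "dist_matrix r" "proper r"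
    and copy: "\<And>n q c. dist_matrix_n n q \<Longrightarrow> 0 < c \<Longrightarrow> \<exists>idx. approx_copy r n (shift_offdiag c q) (c/2) idx"
  shows "weakly_universal r"
  unfolding weakly_universal_def
proof (intro conjI assms allI impI)
  fix n q and \<epsilon> :: real assume q: "dist_matrix_n n q" and "0 < \<epsilon>"
  obtain idx where idx: "\<And>k s. k < n \<Longrightarrow> s < n \<Longrightarrow> \<bar>r (idx k) (idx s) - shift_offdiag (\<epsilon>/2) q k s\<bar> < \<epsilon>/4"
    using copy[OF q, of "\<epsilon>/2"] \<open>0 < \<epsilon>\<close> unfolding approx_copy_def by auto
  have r0: "r i i = 0" for i using \<open>dist_matrix r\<close> unfolding dist_matrix_def by blast
  have q0: "q k k = 0" and q_nonneg: "0 \<le> q k s" if "k < n" "s < n" for k s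
    using q that unfolding dist_matrix_n_def by auto
  have "inj_on idx {..<n}"
  proof (rule inj_onI, rule ccontr)
    fix k s assume "k \<in> {..<n}" "s \<in> {..<n}" "idx k = idx s" "k \<noteq> s"
    then show False
      using idx[of k s] q_nonneg[of k s] \<open>0 < \<epsilon>\<close> by (simp add: r0 shift_offdiag_def abs_less_iff)
  qed
  moreover have "\<bar>r (idx k) (idx s) - q k s\<bar> < \<epsilon>" if "k < n" "s < n" for k s
    using idx[OF that] q0[OF that(1) that(1)] \<open>0 < \<epsilon>\<close>
    unfolding shift_offdiag_def abs_less_iff by (cases "k = s") simp_all
  ultimately show "\<exists>idx. inj_on idx {..<n} \<and> (\<forall>k<n. \<forall>s<n. \<bar>r (idx k) (idx s) - q k s\<bar> < \<epsilon>)"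
    by blast
qed

lemma universal_imp_weakly_universal: "universal r \<Longrightarrow> weakly_universal r"
  by (rule weakly_universalI_shift) (auto simp: universal_def intro: universal_approx_copy_shift)

definition point_dist_matrix :: "(nat \<Rightarrow> 'a::metric_space) \<Rightarrow> nat \<Rightarrow> nat \<Rightarrow> real" where
  "point_dist_matrix p i j = dist (p i) (p j)"

lemma dist_matrix_point_dist_matrix: "dist_matrix (point_dist_matrix p)"
  unfolding dist_matrix_def point_dist_matrix_def by (simp add: dist_commute dist_triangle2)

lemma proper_point_dist_matrix: "inj p \<Longrightarrow> proper (point_dist_matrix p)"
  unfolding proper_def point_dist_matrix_def by (simp add: inj_eq)

text \<open>The length in coordinate 0 makes \<open>rat_point\<close> injective despite trailing zeros, and isolates \<open>[]\<close>.\<close>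
definition rat_seq :: "rat list \<Rightarrow> nat \<Rightarrow> real" where
  "rat_seq xs i = (if i = 0 then real (length xs) else if i \<le> length xs then of_rat (xs ! (i - 1)) else 0)"

definition rat_point :: "rat list \<Rightarrow> (nat \<Rightarrow>\<^sub>C real)" where
  "rat_point xs = Bcontfun (rat_seq xs)"

lemma rat_seq_bcontfun: "rat_seq xs \<in> bcontfun"
proof -
  have "range (rat_seq xs) \<subseteq> {real (length xs), 0} \<union> of_rat ` set xs"
    by (auto simp: rat_seq_def)
  then have "bounded (range (rat_seq xs))"
    by (rule bounded_subset[OF finite_imp_bounded, rotated]) simp
  then show ?thesis unfolding bcontfun_def by simp
qed

lemma apply_rat_point [simp]: "apply_bcontfun (rat_point xs) = rat_seq xs"
  by (simp add: rat_point_def Bcontfun_inverse rat_seq_bcontfun)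

lemma inj_rat_point: "inj rat_point"
proof (rule injI)
  fix xs ys assume "rat_point xs = rat_point ys"
  then have seq: "rat_seq xs = rat_seq ys" by (metis apply_rat_point)
  from fun_cong[OF seq, of 0] have len: "length xs = length ys" by (simp add: rat_seq_def)
  moreover have "xs ! i = ys ! i" if "i < length xs" for i
    using fun_cong[OF seq, of "Suc i"] that len by (simp add: rat_seq_def)
  ultimately show "xs = ys" by (rule nth_equalityI)
qed

lemma dist_rat_point_Nil:
  assumes "xs \<noteq> []" shows "1 \<le> dist (rat_point []) (rat_point xs)"
proof -
  have "1 \<le> real (length xs)" using assms by (cases xs) auto
  also have "\<dots> \<le> dist (rat_point []) (rat_point xs)"
    using dist_bounded[of "rat_point []" 0 "rat_point xs"] by (simp add: rat_seq_def dist_real_def)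
  finally show ?thesis .
qed

lemma dist_rat_point_frechet:
  assumes q: "dist_matrix_n n q" and R: "\<And>k t. \<bar>of_rat (R k t) - q k t\<bar> \<le> \<delta>"
    and ks: "k < n" "s < n"
  shows "\<bar>dist (rat_point (map (R k) [0..<n])) (rat_point (map (R s) [0..<n])) - q k s\<bar> \<le> 2 * \<delta>"
proof -
  let ?x = "rat_point (map (R k) [0..<n])" and ?y = "rat_point (map (R s) [0..<n])"
  have seq: "rat_seq (map (R j) [0..<n]) i = (if i = 0 then real n else if i \<le> n then of_rat (R j (i - 1)) else 0)"
    for j i
    by (simp add: rat_seq_def)
  have q_sym: "q i j = q j i" and q_tri: "q i j \<le> q i l + q l j" and q0: "q i i = 0"
    and q_nonneg: "0 \<le> q i j" if "i < n" "j < n" "l < n" for i j l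
    using q that unfolding dist_matrix_n_def by auto
  have R_bounds: "of_rat (R j t) \<le> q j t + \<delta>" "q j t - \<delta> \<le> of_rat (R j t)" for j t
    using R[of j t] unfolding abs_le_iff by linarith+
  have upper: "dist ?x ?y \<le> q k s + 2 * \<delta>"
  proof (rule dist_bound)
    fix i
    show "dist (?x i) (?y i) \<le> q k s + 2 * \<delta>"
    proof (cases "0 < i \<and> i \<le> n")
      case True
      then have "i - 1 < n" by linarith
      then have "\<bar>of_rat (R k (i - 1)) - of_rat (R s (i - 1))\<bar> \<le> q k s + 2 * \<delta>"
        using q_tri[of k "i - 1" s] q_tri[of s "i - 1" k] q_sym[of s k] ks
          R_bounds[of k "i - 1"] R_bounds[of s "i - 1"]
        unfolding abs_le_iff by auto
      then show ?thesis using True by (simp add: seq dist_real_def)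
    next
      case False
      then show ?thesis using q_nonneg[OF ks ks(1)] R[of k k] by (auto simp: seq)
    qed
  qed
  have "dist (?x (Suc s)) (?y (Suc s)) \<le> dist ?x ?y"
    by (rule dist_bounded)
  then have "\<bar>of_rat (R k s) - of_rat (R s s)\<bar> \<le> dist ?x ?y"
    using ks by (simp add: seq dist_real_def)
  then have lower: "q k s - 2 * \<delta> \<le> dist ?x ?y"
    using R_bounds[of k s] R_bounds[of s s] q0[OF ks(2) ks(2) ks(2)] by linarith
  from upper lower show ?thesis unfolding abs_le_iff by linarith
qed

lemma rat_point_approx:
  assumes q: "dist_matrix_n n q" and "0 < \<epsilon>"
  obtains xs where "\<And>k s. k < n \<Longrightarrow> s < n \<Longrightarrow> \<bar>dist (rat_point (xs k)) (rat_point (xs s)) - q k s\<bar> < \<epsilon>"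
proof -
  have "\<exists>x::rat. \<bar>of_rat x - y\<bar> \<le> \<epsilon>/4" for y
  proof -
    obtain x :: rat where "y - \<epsilon>/4 < of_rat x" "of_rat x < y + \<epsilon>/4"
      using of_rat_dense[of "y - \<epsilon>/4" "y + \<epsilon>/4"] \<open>0 < \<epsilon>\<close> by auto
    then have "\<bar>of_rat x - y\<bar> \<le> \<epsilon>/4" unfolding abs_le_iff by linarith
    then show ?thesis ..
  qed
  then obtain round :: "real \<Rightarrow> rat" where round: "\<And>y. \<bar>of_rat (round y) - y\<bar> \<le> \<epsilon>/4" by metis
  show ?thesis
  proof (rule that)
    fix k s assume "k < n" "s < n"
    with dist_rat_point_frechet[OF q round] \<open>0 < \<epsilon>\<close>
    show "\<bar>dist (rat_point (map (\<lambda>t. round (q k t)) [0..<n])) (rat_point (map (\<lambda>t. round (q s t)) [0..<n]))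
      - q k s\<bar> < \<epsilon>"
      by fastforce
  qed
qed

definition rat_sup_matrix :: "nat \<Rightarrow> nat \<Rightarrow> real" where
  "rat_sup_matrix = point_dist_matrix (\<lambda>i. rat_point (from_nat_into UNIV i))"

lemma inj_rat_point_from_nat_into: "inj (\<lambda>i. rat_point (from_nat_into (UNIV :: rat list set) i))"
  using inj_compose[OF inj_rat_point bij_betw_imp_inj_on[OF bij_betw_from_nat_into]]
  by (simp add: comp_def infinite_UNIV_listI)

lemma weakly_universal_rat_sup_matrix: "weakly_universal rat_sup_matrix"
  unfolding rat_sup_matrix_def
proof (rule weakly_universalI_shift)
  fix n q and c :: real assume "dist_matrix_n n q" "0 < c"
  then have "dist_matrix_n n (shift_offdiag c q)" "0 < c/2" by (simp_all add: dist_matrix_n_shift_offdiag)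
  then obtain xs where xs: "\<And>k s. k < n \<Longrightarrow> s < n \<Longrightarrow>
      \<bar>dist (rat_point (xs k)) (rat_point (xs s)) - shift_offdiag c q k s\<bar> < c/2"
    by (rule rat_point_approx) blast
  have "from_nat_into UNIV (to_nat_on UNIV (xs k)) = xs k" for k by simp
  with xs show "\<exists>idx. approx_copy (point_dist_matrix (\<lambda>i. rat_point (from_nat_into UNIV i))) n (shift_offdiag c q) (c/2) idx"
    unfolding approx_copy_def point_dist_matrix_def by (intro exI[of _ "\<lambda>k. to_nat_on UNIV (xs k)"]) simp
qed (simp_all add: dist_matrix_point_dist_matrix proper_point_dist_matrix inj_rat_point_from_nat_into)

lemma not_universal_rat_sup_matrix: "\<not> universal rat_sup_matrix"
proof
  assume U: "universal rat_sup_matrix"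
  obtain i where i: "from_nat_into UNIV i = ([] :: rat list)"
    using from_nat_into_surj[OF countableI_type UNIV_I] by blast
  obtain m where m: "0 < rat_sup_matrix i m" "rat_sup_matrix i m < 1"
    using universal_no_isolated_point[OF U zero_less_one] by blast
  show False
  proof (cases "from_nat_into UNIV m = ([] :: rat list)")
    case True
    then have "rat_sup_matrix i m = 0" using i by (simp add: rat_sup_matrix_def point_dist_matrix_def)
    with m show False by simp
  next
    case False
    then have "1 \<le> rat_sup_matrix i m"
      using i dist_rat_point_Nil by (simp add: rat_sup_matrix_def point_dist_matrix_def)
    with m show False by simp
  qed
qed

theorem lemma5:
  shows "(\<forall>r :: nat \<Rightarrow> nat \<Rightarrow> real. universal r \<longrightarrow> weakly_universal r) \<and>
         (\<exists>r :: nat \<Rightarrow> nat \<Rightarrow> real. weakly_universal r \<and> \<not> universal r)"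
  using universal_imp_weakly_universal weakly_universal_rat_sup_matrix not_universal_rat_sup_matrix
  by blast

end
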